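(* For each $\kappa>0$ there exists a constant $D_{\min}(\kappa)$ such that for all $D<D_{\min}(\kappa)$ (with $D>0$) one has $\inf_{\varphi\in W^{1,2}(\mathbb{T})}\mathcal J(\varphi)<-\kappa^2/2$.
   Context: $\mathbb{T}=[0,1]$ with endpoints identified; $D>0,\kappa>0$; $$\mathcal J(u)=\frac D2\int_0^1|u_x|^2dx+\frac12\int_0^1u^2dx-\kappa\log\Big(\int_0^1e^udx\Big),\qquad u\in W^{1,2}(\mathbb{T}).$$ Note that $\mathcal J(\kappa)=-\kappa^2/2$ for the constant function $\kappa$. *)

theory Defs
  imports "HOL-Analysis.Analysis"
begin

text \<open>The torus T = [0,1] with endpoints identified. A function u on T is represented
by its values on [0,1] with u 0 = u 1. u belongs to W^{1,2}(T) iff it is absolutely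
continuous with a weak derivative g in L^2(0,1): u t = u 0 + int_0^t g for t in [0,1],
together with the periodicity u 1 = u 0.\<close>

definition is_weak_deriv_T :: "(real \<Rightarrow> real) \<Rightarrow> (real \<Rightarrow> real) \<Rightarrow> bool" where
  "is_weak_deriv_T u g \<longleftrightarrow>
     g \<in> borel_measurable lborel \<and>
     set_integrable lborel {0..1} g \<and>
     set_integrable lborel {0..1} (\<lambda>x. (g x)\<^sup>2) \<and>
     (\<forall>t\<in>{0..1}. u t = u 0 + (LBINT x:{0..t}. g x)) \<and>
     u 1 = u 0"

definition W12_torus :: "(real \<Rightarrow> real) set" where
  "W12_torus = {u. \<exists>g. is_weak_deriv_T u g}"

definition weak_deriv_T :: "(real \<Rightarrow> real) \<Rightarrow> (real \<Rightarrow> real)" where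
  "weak_deriv_T u = (SOME g. is_weak_deriv_T u g)"

definition J_functional :: "real \<Rightarrow> real \<Rightarrow> (real \<Rightarrow> real) \<Rightarrow> real" where
  "J_functional D \<kappa> u =
     D / 2 * (LBINT x:{0..1}. (weak_deriv_T u x)\<^sup>2)
     + 1 / 2 * (LBINT x:{0..1}. (u x)\<^sup>2)
     - \<kappa> * ln (LBINT x:{0..1}. exp (u x))"

end

theory Submission
  imports Defs
begin

text \<open>
  For a fixed \<open>\<phi>\<close> the functional is affine in \<open>D\<close>, so it suffices to find
  \<open>\<phi> \<in> W\<^sup>1\<^sup>,\<^sup>2\<close> whose value at \<open>D = 0\<close> is already below \<open>-\<kappa>\<^sup>2/2\<close>, the value at the
  constant \<open>\<kappa>\<close>. Take a trapezoidal bump of height \<open>A\<close>, plateau width \<open>2p\<close> and support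
  width \<open>4p\<close>: then \<open>\<integral>\<phi>\<^sup>2 \<le> 4pA\<^sup>2\<close> and \<open>\<integral>e\<^sup>\<phi> \<ge> 2pe\<^sup>A\<close>, so the value at \<open>D = 0\<close> is at most
  \<open>2pA\<^sup>2 - \<kappa>(A + ln 2p)\<close>. With \<open>2p = e\<^sup>-\<^sup>A\<^sup>/\<^sup>2\<close> this is at most \<open>8 - \<kappa>A/2\<close>, which lies
  below \<open>-\<kappa>\<^sup>2/2\<close> as soon as \<open>A > \<kappa> + 16/\<kappa>\<close>.
\<close>

lemma set_integrable_Icc_if_bounded:
  fixes h :: "real \<Rightarrow> real"
  assumes [measurable]: "h \<in> borel_measurable borel"
    and bound: "\<And>x. x \<in> {a..b} \<Longrightarrow> \<bar>h x\<bar> \<le> C"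
  shows "set_integrable lborel {a..b} h"
proof (rule set_integrable_bound[of lborel "{a..b}" "\<lambda>_. C"])
  show "set_integrable lborel {a..b} (\<lambda>_. C)"
    by (rule borel_integrable_atLeastAtMost') simp
  have "norm (h x) \<le> norm C" if "x \<in> {a..b}" for x
    using bound[OF that] by simp
  then show "AE x\<in>{a..b} in lborel. norm (h x) \<le> norm C"
    by simp
qed (simp add: set_borel_measurable_def)

lemma is_weak_deriv_T_if_piecewise_differentiable:
  fixes u g :: "real \<Rightarrow> real"
  assumes "finite S" and u_cont: "continuous_on {0..1} u" and "u 1 = u 0"
    and deriv: "\<And>x. x \<in> {0<..<1} - S \<Longrightarrow> (u has_real_derivative g x) (at x)"
    and [measurable]: "g \<in> borel_measurable borel"
    and bound: "\<And>x. x \<in> {0..1} \<Longrightarrow> \<bar>g x\<bar> \<le> M"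
  shows "is_weak_deriv_T u g"
proof -
  have g_int: "set_integrable lborel {0..1} g"
    using bound by (rule set_integrable_Icc_if_bounded[rotated]) measurable
  have g2_int: "set_integrable lborel {0..1} (\<lambda>x. (g x)\<^sup>2)"
  proof (rule set_integrable_Icc_if_bounded)
    show "\<bar>(g x)\<^sup>2\<bar> \<le> M\<^sup>2" if "x \<in> {0..1}" for x
      using power_mono[OF bound[OF that] abs_ge_zero, of 2] by simp
  qed measurable
  have primitive: "u t = u 0 + (LBINT x:{0..t}. g x)" if t: "t \<in> {0..1}" for t
  proof -
    have FTC: "(g has_integral (u t - u 0)) {0..t}"
    proof (rule fundamental_theorem_of_calculus_interior_strong[OF \<open>finite S\<close>])
      show "continuous_on {0..t} u"
        using t by (auto intro: continuous_on_subset[OF u_cont])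
      show "(u has_vector_derivative g x) (at x)" if "x \<in> {0<..<t} - S" for x
        using that t deriv[of x] by (auto simp: has_real_derivative_iff_has_vector_derivative)
    qed (use t in auto)
    have "set_integrable lborel {0..t} g"
      by (rule set_integrable_subset[OF g_int]) (use t in auto)
    then have "(LBINT x:{0..t}. g x) = integral {0..t} g"
      by (rule set_borel_integral_eq_integral(2))
    with integral_unique[OF FTC] show ?thesis
      by simp
  qed
  have "g \<in> borel_measurable lborel"
    by measurable
  with \<open>u 1 = u 0\<close> g_int g2_int primitive show ?thesis
    unfolding is_weak_deriv_T_def by blast
qed

definition trapezoid :: "real \<Rightarrow> real" where
  "trapezoid s = min 1 (max 0 (2 - \<bar>s\<bar>))"

definition trapezoid_deriv :: "real \<Rightarrow> real" where
  "trapezoid_deriv s = (if -2 < s \<and> s < -1 then 1 else if 1 < s \<and> s < 2 then -1 else 0)"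

lemma trapezoid_bounds: "0 \<le> trapezoid s" "trapezoid s \<le> 1"
  by (auto simp: trapezoid_def)

lemma trapezoid_eq_1: "\<bar>s\<bar> \<le> 1 \<Longrightarrow> trapezoid s = 1"
  by (auto simp: trapezoid_def)

lemma trapezoid_eq_0: "2 \<le> \<bar>s\<bar> \<Longrightarrow> trapezoid s = 0"
  by (auto simp: trapezoid_def)

lemma continuous_on_trapezoid: "continuous_on S trapezoid"
  unfolding trapezoid_def by (intro continuous_intros)

lemma trapezoid_deriv_measurable [measurable]: "trapezoid_deriv \<in> borel_measurable borel"
  unfolding trapezoid_deriv_def by measurable

lemma abs_trapezoid_deriv_le: "\<bar>trapezoid_deriv s\<bar> \<le> 1"
  by (simp add: trapezoid_deriv_def)

lemma has_real_derivative_if_affine_on_open: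
  assumes "open T" "x \<in> T" "\<And>y. y \<in> T \<Longrightarrow> f y = a * y + b"
  shows "(f has_real_derivative a) (at x)"
  by (rule has_field_derivative_transform_within_open[of "\<lambda>y. a * y + b" _ _ T])
    (use assms in \<open>auto intro!: derivative_eq_intros\<close>)

lemma trapezoid_has_real_derivative:
  assumes "s \<notin> {-2, -1, 1, 2}"
  shows "(trapezoid has_real_derivative trapezoid_deriv s) (at s)"
proof -
  consider "s < -2" | "-2 < s" "s < -1" | "-1 < s" "s < 1" | "1 < s" "s < 2" | "2 < s"
    using assms by fastforce
  then show ?thesis
  proof cases
    case 1
    then show ?thesis
      by (intro has_real_derivative_if_affine_on_open[of "{..< -2}" _ _ _ 0])
        (auto simp: trapezoid_def trapezoid_deriv_def)
  next
    case 2
    then show ?thesis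
      by (intro has_real_derivative_if_affine_on_open[of "{-2<..< -1}" _ _ _ 2])
        (auto simp: trapezoid_def trapezoid_deriv_def)
  next
    case 3
    then show ?thesis
      by (intro has_real_derivative_if_affine_on_open[of "{-1<..<1}" _ _ _ 1])
        (auto simp: trapezoid_def trapezoid_deriv_def)
  next
    case 4
    then show ?thesis
      by (intro has_real_derivative_if_affine_on_open[of "{1<..<2}" _ _ _ 2])
        (auto simp: trapezoid_def trapezoid_deriv_def)
  next
    case 5
    then show ?thesis
      by (intro has_real_derivative_if_affine_on_open[of "{2<..}" _ _ _ 0])
        (auto simp: trapezoid_def trapezoid_deriv_def)
  qed
qed

definition bump :: "real \<Rightarrow> real \<Rightarrow> real \<Rightarrow> real" where
  "bump A p x = A * trapezoid ((x - 1/2) / p)"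

lemma bump_eq_height:
  assumes "0 < p" "\<bar>x - 1/2\<bar> \<le> p"
  shows "bump A p x = A"
  using assms by (simp add: bump_def trapezoid_eq_1 abs_divide)

lemma bump_eq_0:
  assumes "0 < p" "2 * p \<le> \<bar>x - 1/2\<bar>"
  shows "bump A p x = 0"
  using assms by (simp add: bump_def trapezoid_eq_0 abs_divide field_simps)

lemma continuous_on_bump: "continuous_on S (bump A p)"
  unfolding bump_def divide_inverse
  by (intro continuous_intros continuous_on_compose2[OF continuous_on_trapezoid[of UNIV]]) auto

lemma bump_in_W12_torus:
  assumes p: "0 < p" "4 * p \<le> 1"
  shows "bump A p \<in> W12_torus"
proof -
  let ?g = "\<lambda>x. A / p * trapezoid_deriv ((x - 1/2) / p)"
  have "is_weak_deriv_T (bump A p) ?g"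
  proof (rule is_weak_deriv_T_if_piecewise_differentiable
      [where S = "(\<lambda>s. 1/2 + p * s) ` {-2, -1, 1, 2}" and M = "\<bar>A\<bar> / p"])
    show "bump A p 1 = bump A p 0"
      using p by (simp add: bump_eq_0)
    show "(bump A p has_real_derivative ?g x) (at x)"
      if "x \<in> {0<..<1} - (\<lambda>s. 1/2 + p * s) ` {-2, -1, 1, 2}" for x
    proof -
      have "(x - 1/2) / p \<notin> {-2, -1, 1, 2}"
        using that p by (auto simp: field_simps)
      then have "((\<lambda>x. A * trapezoid ((x - 1/2) / p)) has_real_derivative
          A * (trapezoid_deriv ((x - 1/2) / p) * (1 / p))) (at x)"
        by (intro DERIV_cmult DERIV_chain2[OF trapezoid_has_real_derivative])
          (use p in \<open>auto intro!: derivative_eq_intros\<close>)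
      then show ?thesis
        unfolding bump_def by (rule DERIV_cong) simp
    qed
    show "\<bar>?g x\<bar> \<le> \<bar>A\<bar> / p" for x
      using p abs_trapezoid_deriv_le[of "(x - 1/2) / p"]
      by (simp add: abs_mult divide_right_mono mult_left_le)
  qed (simp_all add: continuous_on_bump)
  then show ?thesis
    unfolding W12_torus_def by blast
qed

lemma bump_squared_le: "(bump A p x)\<^sup>2 \<le> A\<^sup>2"
proof -
  have "(trapezoid ((x - 1/2) / p))\<^sup>2 \<le> 1"
    using trapezoid_bounds by (simp add: power_le_one)
  then show ?thesis
    unfolding bump_def power_mult_distrib by (simp add: mult_left_le)
qed

lemma integral_bump_squared_le:
  assumes p: "0 < p" "4 * p \<le> 1"
  shows "(LBINT x:{0..1}. (bump A p x)\<^sup>2) \<le> 4 * p * A\<^sup>2"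
proof -
  let ?f = "\<lambda>x. (bump A p x)\<^sup>2"
  let ?S = "{1/2 - 2 * p..1/2 + 2 * p}"
  have cont: "continuous_on T ?f" for T
    by (intro continuous_intros continuous_on_bump)
  have "(LBINT x:{0..1}. ?f x) = integral {0..1} ?f"
    by (rule set_borel_integral_eq_integral(2)[OF borel_integrable_atLeastAtMost'[OF cont]])
  also have "\<dots> = integral {0..1} (\<lambda>x. if x \<in> ?S then ?f x else 0)"
    by (rule integral_cong) (use p in \<open>auto simp: bump_eq_0 abs_if\<close>)
  also have "\<dots> = integral ?S ?f"
  proof -
    have "?S \<inter> {0..1} = ?S"
      using p by auto
    then show ?thesis
      by (simp only: Henstock_Kurzweil_Integration.integral_restrict_Int)
  qed
  also have "\<dots> \<le> integral ?S (\<lambda>_. A\<^sup>2)"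
    by (rule integral_le) (auto intro: integrable_continuous_interval cont bump_squared_le)
  also have "\<dots> = 4 * p * A\<^sup>2"
    using p by simp
  finally show ?thesis .
qed

lemma integral_exp_bump_ge:
  assumes p: "0 < p" "4 * p \<le> 1"
  shows "2 * p * exp A \<le> (LBINT x:{0..1}. exp (bump A p x))"
proof -
  let ?f = "\<lambda>x. exp (bump A p x)"
  let ?P = "{1/2 - p..1/2 + p}"
  have cont: "continuous_on T ?f" for T
    by (intro continuous_intros continuous_on_bump)
  have "2 * p * exp A = integral ?P (\<lambda>_. exp A)"
    using p by simp
  also have "\<dots> = integral ?P ?f"
    by (rule integral_cong) (use p in \<open>simp add: bump_eq_height abs_le_iff\<close>)
  also have "\<dots> \<le> integral {0..1} ?f"
    by (rule integral_subset_le) (use p in \<open>auto intro: integrable_continuous_interval cont\<close>)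
  also have "\<dots> = (LBINT x:{0..1}. ?f x)"
    by (rule set_borel_integral_eq_integral(2)[OF borel_integrable_atLeastAtMost'[OF cont], symmetric])
  finally show ?thesis .
qed

lemma J_functional_0_bump_le:
  assumes "0 \<le> \<kappa>" and p: "0 < p" "4 * p \<le> 1"
  shows "J_functional 0 \<kappa> (bump A p) \<le> 2 * p * A\<^sup>2 - \<kappa> * (A + ln (2 * p))"
proof -
  have "A + ln (2 * p) = ln (2 * p * exp A)"
    using p by (simp add: ln_mult)
  also have "\<dots> \<le> ln (LBINT x:{0..1}. exp (bump A p x))"
    using p integral_exp_bump_ge[OF p, of A] by (intro ln_mono) auto
  finally have "\<kappa> * (A + ln (2 * p)) \<le> \<kappa> * ln (LBINT x:{0..1}. exp (bump A p x))"
    using \<open>0 \<le> \<kappa>\<close> by (rule mult_left_mono)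
  with integral_bump_squared_le[OF p, of A] show ?thesis
    unfolding J_functional_def by simp
qed

lemma exists_W12_torus_J_functional_0_below:
  assumes "0 < \<kappa>"
  shows "\<exists>\<phi>\<in>W12_torus. J_functional 0 \<kappa> \<phi> < - (\<kappa>\<^sup>2 / 2)"
proof -
  define A where "A = \<kappa> + 2 + 16 / \<kappa>"
  define p where "p = exp (- (A / 2)) / 2"
  have "2 \<le> A"
    using assms by (simp add: A_def)
  have two_p: "2 * p = inverse (exp (A / 2))"
    by (simp add: p_def exp_minus)
  have "2 \<le> exp (A / 2)"
    using \<open>2 \<le> A\<close> exp_ge_add_one_self[of "A / 2"] by linarith
  then have p: "0 < p" "4 * p \<le> 1"
    using le_imp_inverse_le[of 2 "exp (A / 2)"] two_p by (auto simp: p_def)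
  have "2 * p * A\<^sup>2 \<le> 8"
  proof -
    have "A\<^sup>2 / 8 \<le> exp (A / 2)"
      using exp_lower_Taylor_quadratic[of "A / 2"] \<open>2 \<le> A\<close> by (simp add: power_divide)
    then show ?thesis
      unfolding two_p by (simp add: field_simps)
  qed
  moreover have "ln (2 * p) = - (A / 2)"
    by (simp add: p_def)
  ultimately have "J_functional 0 \<kappa> (bump A p) \<le> 8 - \<kappa> * (A / 2)"
    using J_functional_0_bump_le[OF _ p, of \<kappa> A] assms by simp
  also have "\<dots> = - (\<kappa>\<^sup>2 / 2) - \<kappa>"
    using assms by (simp add: A_def field_simps power2_eq_square)
  also have "\<dots> < - (\<kappa>\<^sup>2 / 2)"
    using assms by simp
  finally show ?thesis
    using bump_in_W12_torus[OF p] by blast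
qed

text \<open>Whatever \<^const>\<open>weak_deriv_T\<close> picks, the Dirichlet term of a fixed \<open>u\<close> is just a real
  number, so no uniqueness of weak derivatives is needed here.\<close>

lemma J_functional_below_for_small_D:
  assumes "J_functional 0 \<kappa> u < c"
  shows "\<exists>Dmin > 0. \<forall>D. 0 < D \<and> D < Dmin \<longrightarrow> J_functional D \<kappa> u < c"
proof -
  have "((\<lambda>D. J_functional D \<kappa> u) \<longlongrightarrow> J_functional 0 \<kappa> u) (at_right 0)"
    unfolding J_functional_def by (auto intro!: tendsto_eq_intros)
  then have "eventually (\<lambda>D. J_functional D \<kappa> u < c) (at_right 0)"
    using assms by (rule order_tendstoD)
  then show ?thesis
    unfolding eventually_at_right_field by blast
qed

theorem mainTheorem4:
  fixes \<kappa> :: real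
  assumes "\<kappa> > 0"
  shows "\<exists>Dmin > 0. \<forall>D. 0 < D \<and> D < Dmin \<longrightarrow>
           (\<exists>\<phi>\<in>W12_torus. J_functional D \<kappa> \<phi> < - (\<kappa>\<^sup>2 / 2))"
proof -
  obtain \<phi> where "\<phi> \<in> W12_torus" and "J_functional 0 \<kappa> \<phi> < - (\<kappa>\<^sup>2 / 2)"
    using exists_W12_torus_J_functional_0_below[OF assms] by blast
  with J_functional_below_for_small_D show ?thesis
    by blast
qed

end
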